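(* Let $X$, $Y$, $\mathcal{E}$ be Euclidean-space-valued random variables on a probability space. Suppose $\Phi\in\mathcal{I}$ and that $\epsilon\in\mathrm{supp}(\mathcal{E})$ is such that $X$ and $Y$ are conditionally independent given $(\Phi,\mathcal{E}=\epsilon)$. Then for this $\epsilon$, $$\Phi\in\arg\max_{Z\in\sigma(X)} I(Y;Z\mid\epsilon),$$ where $I(\cdot;\cdot\mid\epsilon)$ denotes mutual information under the conditional law given $\mathcal{E}=\epsilon$.
   Context: The set of invariant features is $\mathcal{I}=\{\Phi\in\sigma(X): p(Y\mid\Phi,\epsilon)=p(Y\mid\Phi)\ \text{for all }\epsilon\in\mathrm{supp}(\mathcal{E})\}$. Writing $Z\in\sigma(X)$ means $Z$ is a random variable measurable with respect to $\sigma(X)$. *)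

theory Defs
  imports "HOL-Probability.Probability"
begin

definition msupp :: "'e::topological_space measure \<Rightarrow> 'e set" where
  "msupp \<mu> = {x. \<forall>U. open U \<and> x \<in> U \<longrightarrow> emeasure \<mu> U > 0}"

definition gen_sigma :: "'a measure \<Rightarrow> ('a \<Rightarrow> 'b::topological_space) \<Rightarrow> 'a measure" where
  "gen_sigma P V = vimage_algebra (space P) V borel"

text \<open>Kullback-Leibler divergence KL(Q || P) with values in [0, infinity] (natural log):
  infinite unless Q is absolutely continuous w.r.t. P; otherwise the integral of
  f ln f - f + 1 (a nonnegative integrand, equal to the usual integral of f ln f
  for probability measures) with f = dQ/dP.\<close>
definition KL_ext :: "'a measure \<Rightarrow> 'a measure \<Rightarrow> ennreal" where
  "KL_ext P Q =
     (if absolutely_continuous P Q then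
        (\<integral>\<^sup>+ x. ennreal (enn2real (RN_deriv P Q x) * ln (enn2real (RN_deriv P Q x))
                         - enn2real (RN_deriv P Q x) + 1) \<partial>P)
      else \<infinity>)"

definition mutual_info ::
  "'a measure \<Rightarrow> ('a \<Rightarrow> 'b::topological_space) \<Rightarrow> ('a \<Rightarrow> 'c::topological_space) \<Rightarrow> ennreal" where
  "mutual_info P A B =
     KL_ext (distr P borel A \<Otimes>\<^sub>M distr P borel B)
            (distr P (borel \<Otimes>\<^sub>M borel) (\<lambda>\<omega>. (A \<omega>, B \<omega>)))"

definition cond_indep ::
  "'a measure \<Rightarrow> ('a \<Rightarrow> 'u::topological_space) \<Rightarrow> ('a \<Rightarrow> 'v::topological_space)
     \<Rightarrow> ('a \<Rightarrow> 'w::topological_space) \<Rightarrow> bool" where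
  "cond_indep P U V W \<longleftrightarrow>
     (\<forall>A \<in> sets borel. \<forall>B \<in> sets borel.
        AE \<omega> in P.
          real_cond_exp P (gen_sigma P W) (indicator (U -` A \<inter> V -` B \<inter> space P)) \<omega>
          = real_cond_exp P (gen_sigma P W) (indicator (U -` A \<inter> space P)) \<omega>
            * real_cond_exp P (gen_sigma P W) (indicator (V -` B \<inter> space P)) \<omega>)"

definition cond_law_kernel ::
  "'a measure \<Rightarrow> ('a \<Rightarrow> 'e::topological_space) \<Rightarrow> ('e \<Rightarrow> 'a measure) \<Rightarrow> bool" where
  "cond_law_kernel M E Pe \<longleftrightarrow>
     (\<forall>e. prob_space (Pe e) \<and> sets (Pe e) = sets M) \<and>
     (\<forall>A \<in> sets M. (\<lambda>e. measure (Pe e) A) \<in> borel_measurable borel) \<and>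
     (\<forall>A \<in> sets M. \<forall>C \<in> sets borel.
        measure M (A \<inter> E -` C \<inter> space M)
          = (\<integral>e. indicator C e * measure (Pe e) A \<partial>(distr M borel E)))"

text \<open>p(Y | Phi, E = e) = p(Y | Phi): the conditional law of Y given Phi under
  the conditional measure Pe e is given by the same function of Phi as under M.\<close>
definition same_cond_law ::
  "'a measure \<Rightarrow> 'a measure \<Rightarrow> ('a \<Rightarrow> 'y::topological_space) \<Rightarrow> ('a \<Rightarrow> 'p::topological_space) \<Rightarrow> bool" where
  "same_cond_law M Q Y Phi \<longleftrightarrow>
     (\<forall>B \<in> sets borel. \<exists>g \<in> borel_measurable (borel :: 'p measure).
        (AE \<omega> in M. real_cond_exp M (gen_sigma M Phi) (indicator (Y -` B \<inter> space M)) \<omega> = g (Phi \<omega>)) \<and>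
        (AE \<omega> in Q. real_cond_exp Q (gen_sigma Q Phi) (indicator (Y -` B \<inter> space Q)) \<omega> = g (Phi \<omega>)))"

definition invariant_feature ::
  "'a measure \<Rightarrow> ('a \<Rightarrow> 'x::topological_space) \<Rightarrow> ('a \<Rightarrow> 'y::topological_space)
     \<Rightarrow> ('a \<Rightarrow> 'e::topological_space) \<Rightarrow> ('e \<Rightarrow> 'a measure) \<Rightarrow> ('a \<Rightarrow> 'p::topological_space) \<Rightarrow> bool" where
  "invariant_feature M X Y E Pe Phi \<longleftrightarrow>
     Phi \<in> gen_sigma M X \<rightarrow>\<^sub>M borel \<and>
     (\<forall>e \<in> msupp (distr M borel E). same_cond_law M (Pe e) Y Phi)"

end

theory Submission
  imports Defs
begin

(* Let Q be the conditional law given E = epsilon and S the sigma-algebra generated by X.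
   Compare, on (values of Y) x (Omega, S), the product mu of the law of Y with the restriction
   of Q to S and the joint law nu of (Y, omega).
   For every S-measurable feature V, I(Y; V) is the KL divergence between the images of mu and
   nu under (y, omega) |-> (y, V omega), so by the data processing inequality (conditional Jensen
   for t ln t) it is at most KL(nu || mu).  If X and Y are conditionally independent given Phi,
   then d nu / d mu = r (y, Phi omega), where r is the density of the joint law of (Y, Phi) with
   respect to the product of the marginals.  This density factors through
   (y, omega) |-> (y, Phi omega), so that map loses no divergence and I(Y; Phi) = KL(nu || mu). *)

definition kl_fun :: "real \<Rightarrow> real" where
  "kl_fun t = t * ln t - t + 1"

lemma kl_fun_ge_tangent:
  assumes "s \<ge> 0" "c > 0"
  shows "s * ln c - c + 1 \<le> kl_fun s"
proof (cases "s = 0")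
  case True
  then show ?thesis using assms by (simp add: kl_fun_def)
next
  case False
  then have s: "s > 0" using assms by auto
  have "ln c - ln s = ln (c / s)" using s assms by (simp add: ln_div)
  also have "\<dots> \<le> c / s - 1" using s assms by (intro ln_le_minus_one) auto
  finally have "s * (ln c - ln s) \<le> s * (c / s - 1)" using s by (intro mult_left_mono) auto
  then show ?thesis using s by (simp add: kl_fun_def algebra_simps)
qed

lemma kl_fun_le_of_rat_tangents:
  assumes "s \<ge> 0" and tangents: "\<And>c. c \<in> \<rat> \<Longrightarrow> c > 0 \<Longrightarrow> s * ln c - c + 1 \<le> y"
  shows "kl_fun s \<le> y"
proof (rule field_le_epsilon)
  fix e :: real assume "0 < e"
  then obtain c where c: "c \<in> \<rat>" "s < c" "c < s + e"
    using Rats_dense_in_real[of s "s + e"] by auto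
  have "s * ln s \<le> s * ln c"
    using assms(1) c by (cases "s = 0") (auto intro: mult_left_mono)
  then have "kl_fun s \<le> s * ln c - c + 1 + e" using c by (simp add: kl_fun_def)
  also have "\<dots> \<le> y + e" using tangents[OF c(1)] assms(1) c(2) by simp
  finally show "kl_fun s \<le> y + e" .
qed

lemma kl_fun_nonneg: "s \<ge> 0 \<Longrightarrow> kl_fun s \<ge> 0"
  using kl_fun_ge_tangent[of s 1] by simp

lemma borel_measurable_kl_fun [measurable]: "kl_fun \<in> borel_measurable borel"
  unfolding kl_fun_def by measurable

(* The library's conditional Jensen inequality needs an open interval, which f need not stay in
   since it may vanish.  Instead, kl_fun is the supremum of its tangent lines at the countably
   many positive rationals, and each affine inequality survives conditional expectation a.e. *)
lemma real_cond_exp_kl_fun_le: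
  assumes "finite_measure M" "subalgebra M F"
    and f: "integrable M f" "AE x in M. f x \<ge> 0" "integrable M (\<lambda>x. kl_fun (f x))"
  shows "AE x in M. kl_fun (real_cond_exp M F f x) \<le> real_cond_exp M F (\<lambda>x. kl_fun (f x)) x"
proof -
  interpret finite_measure M by fact
  interpret finite_measure_subalgebra M F by unfold_locales (use assms(2) in auto)
  let ?Ef = "real_cond_exp M F f" and ?EK = "real_cond_exp M F (\<lambda>x. kl_fun (f x))"
  have tangent: "AE x in M. ?Ef x * ln c - c + 1 \<le> ?EK x" if c: "c > 0" "c \<in> \<rat>" for c
  proof -
    have affine: "integrable M (\<lambda>x. ln c * f x)" "integrable M (\<lambda>x. 1 - c)"
      using f(1) by auto
    have "ln c * t + (1 - c) \<le> kl_fun t" if "t \<ge> 0" for t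
      using kl_fun_ge_tangent[OF that c(1)] by (simp add: mult.commute)
    then have "AE x in M. ln c * f x + (1 - c) \<le> kl_fun (f x)"
      using f(2) by (auto elim: eventually_mono)
    then have "AE x in M. real_cond_exp M F (\<lambda>x. ln c * f x + (1 - c)) x \<le> ?EK x"
      using affine f(3) by (intro real_cond_exp_mono) auto
    moreover have "AE x in M. real_cond_exp M F (\<lambda>x. ln c * f x + (1 - c)) x
        = real_cond_exp M F (\<lambda>x. ln c * f x) x + real_cond_exp M F (\<lambda>x. 1 - c) x"
      by (rule real_cond_exp_add[OF affine])
    moreover have "AE x in M. real_cond_exp M F (\<lambda>x. 1 - c) x = 1 - c"
      by (rule real_cond_exp_F_meas) auto
    moreover have "AE x in M. real_cond_exp M F (\<lambda>x. ln c * f x) x = ln c * ?Ef x"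
      by (rule real_cond_exp_cmult[OF f(1)])
    ultimately show ?thesis
      by eventually_elim (simp add: mult.commute)
  qed
  have "AE x in M. \<forall>c\<in>{c\<in>\<rat>. c > 0}. ?Ef x * ln c - c + 1 \<le> ?EK x"
    using tangent countable_rat
    by (intro AE_ball_countable') (auto intro: countable_subset[of _ \<rat>])
  moreover have "AE x in M. ?Ef x \<ge> 0"
    using f by (intro real_cond_exp_pos) auto
  ultimately show ?thesis
    by eventually_elim (rule kl_fun_le_of_rat_tangents, auto)
qed

lemma nn_integral_kl_fun_real_cond_exp_le:
  assumes "finite_measure M" "subalgebra M F" "integrable M f" "AE x in M. f x \<ge> 0"
  shows "(\<integral>\<^sup>+ x. kl_fun (real_cond_exp M F f x) \<partial>M) \<le> (\<integral>\<^sup>+ x. kl_fun (f x) \<partial>M)"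
proof (cases "(\<integral>\<^sup>+ x. kl_fun (f x) \<partial>M) = \<infinity>")
  case False
  interpret finite_measure M by fact
  interpret finite_measure_subalgebra M F by unfold_locales (use assms(2) in auto)
  have [measurable]: "f \<in> borel_measurable M" using assms(3) by auto
  have nonneg_kl: "AE x in M. kl_fun (f x) \<ge> 0"
    using assms(4) by eventually_elim (rule kl_fun_nonneg)
  have int_kl: "integrable M (\<lambda>x. kl_fun (f x))"
    using False nonneg_kl by (intro integrableI_nonneg) (auto simp: less_top)
  have nonneg_EK: "AE x in M. real_cond_exp M F (\<lambda>x. kl_fun (f x)) x \<ge> 0"
    using nonneg_kl by (intro real_cond_exp_pos) auto
  have "(\<integral>\<^sup>+ x. kl_fun (real_cond_exp M F f x) \<partial>M)
      \<le> (\<integral>\<^sup>+ x. real_cond_exp M F (\<lambda>x. kl_fun (f x)) x \<partial>M)"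
    using real_cond_exp_kl_fun_le[OF assms int_kl]
    by (intro nn_integral_mono_AE) (auto simp: ennreal_leI)
  also have "\<dots> = (\<integral> x. real_cond_exp M F (\<lambda>x. kl_fun (f x)) x \<partial>M)"
    using nonneg_EK by (rule nn_integral_eq_integral[OF real_cond_exp_int(1)[OF int_kl]])
  also have "\<dots> = (\<integral>\<^sup>+ x. kl_fun (f x) \<partial>M)"
    using nn_integral_eq_integral[OF int_kl nonneg_kl] by (simp add: real_cond_exp_int(2)[OF int_kl])
  finally show ?thesis .
qed simp

lemma KL_ext_eq_kl_fun:
  "KL_ext P Q = (if absolutely_continuous P Q
     then \<integral>\<^sup>+ x. kl_fun (enn2real (RN_deriv P Q x)) \<partial>P else \<infinity>)"
  unfolding KL_ext_def kl_fun_def by simp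

lemma subalgebra_vimage_algebra:
  "T \<in> M \<rightarrow>\<^sub>M N \<Longrightarrow> subalgebra M (vimage_algebra (space M) T N)"
  unfolding subalgebra_def using sets_image_in_sets[OF refl] by auto

lemma absolutely_continuous_distr:
  assumes ac: "absolutely_continuous \<mu> \<nu>" and sets_eq: "sets \<nu> = sets \<mu>"
    and T[measurable]: "T \<in> \<mu> \<rightarrow>\<^sub>M N"
  shows "absolutely_continuous (distr \<mu> N T) (distr \<nu> N T)"
  unfolding absolutely_continuous_def
proof
  fix B assume "B \<in> null_sets (distr \<mu> N T)"
  then have B: "B \<in> sets N" "T -` B \<inter> space \<mu> \<in> null_sets \<mu>"
    by (auto simp: emeasure_distr null_sets_def)
  then have "T -` B \<inter> space \<nu> \<in> null_sets \<nu>"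
    using ac sets_eq_imp_space_eq[OF sets_eq] unfolding absolutely_continuous_def by auto
  moreover have "T \<in> \<nu> \<rightarrow>\<^sub>M N" using T measurable_cong_sets[OF sets_eq refl] by blast
  ultimately show "B \<in> null_sets (distr \<nu> N T)"
    using B by (intro null_setsI) (auto simp: emeasure_distr)
qed

context sigma_finite_measure
begin

lemma integrable_enn2real_RN_deriv:
  assumes "finite_measure N" "absolutely_continuous M N" "sets N = sets M"
  shows "integrable M (\<lambda>x. enn2real (RN_deriv M N x))"
proof -
  have "integrable N (\<lambda>_. 1 :: real)" using finite_measure.integrable_const[OF assms(1)] .
  then show ?thesis
    using RN_deriv_integrable[of N "\<lambda>_. 1"] assms by (simp add: finite_measure.sigma_finite_measure)
qed

lemma set_integral_enn2real_RN_deriv: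
  assumes "finite_measure N" "absolutely_continuous M N" "sets N = sets M" "A \<in> sets M"
  shows "(\<integral>x\<in>A. enn2real (RN_deriv M N x) \<partial>M) = measure N A"
  using RN_deriv_integral[of N "indicator A"] assms sets.Int_space_eq2[of A N]
  by (simp add: finite_measure.sigma_finite_measure set_lebesgue_integral_def mult.commute)

end

lemma real_cond_exp_RN_deriv_distr:
  assumes fin: "finite_measure \<mu>" "finite_measure \<nu>"
    and ac: "absolutely_continuous \<mu> \<nu>" and sets_eq: "sets \<nu> = sets \<mu>"
    and T[measurable]: "T \<in> \<mu> \<rightarrow>\<^sub>M N"
  shows "AE x in \<mu>. real_cond_exp \<mu> (vimage_algebra (space \<mu>) T N) (\<lambda>x. enn2real (RN_deriv \<mu> \<nu> x)) x
           = enn2real (RN_deriv (distr \<mu> N T) (distr \<nu> N T) (T x))"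
proof -
  interpret \<mu>: finite_measure \<mu> by fact
  let ?\<mu>T = "distr \<mu> N T" and ?\<nu>T = "distr \<nu> N T" and ?G = "vimage_algebra (space \<mu>) T N"
  have [measurable]: "T \<in> \<nu> \<rightarrow>\<^sub>M N" using T measurable_cong_sets[OF sets_eq refl] by blast
  have finT: "finite_measure ?\<mu>T" "finite_measure ?\<nu>T"
    using fin by (auto intro: finite_measure.finite_measure_distr)
  have acT: "absolutely_continuous ?\<mu>T ?\<nu>T" by (rule absolutely_continuous_distr[OF ac sets_eq T])
  have setsT: "sets ?\<nu>T = sets ?\<mu>T" by simp
  interpret \<mu>T: finite_measure ?\<mu>T by (fact finT)
  interpret finite_measure_subalgebra \<mu> ?G
    by unfold_locales (rule subalgebra_vimage_algebra[OF T])
  show ?thesis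
  proof (rule real_cond_exp_charact)
    show "integrable \<mu> (\<lambda>x. enn2real (RN_deriv \<mu> \<nu> x))"
      by (rule \<mu>.integrable_enn2real_RN_deriv[OF fin(2) ac sets_eq])
    show "integrable \<mu> (\<lambda>x. enn2real (RN_deriv ?\<mu>T ?\<nu>T (T x)))"
      using \<mu>T.integrable_enn2real_RN_deriv[OF finT(2) acT setsT] by (simp add: integrable_distr_eq)
    have "T \<in> ?G \<rightarrow>\<^sub>M N"
      by (rule measurable_vimage_algebra1) (use measurable_space[OF T] in auto)
    then show "(\<lambda>x. enn2real (RN_deriv ?\<mu>T ?\<nu>T (T x))) \<in> borel_measurable ?G"
      by measurable
  next
    fix A assume "A \<in> sets ?G"
    then obtain B where B[measurable]: "B \<in> sets N" and A: "A = T -` B \<inter> space \<mu>"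
      using sets_vimage_algebra2[of T "space \<mu>" N] measurable_space[OF T] by auto
    have "(\<integral>x\<in>A. enn2real (RN_deriv ?\<mu>T ?\<nu>T (T x)) \<partial>\<mu>)
        = (\<integral>y\<in>B. enn2real (RN_deriv ?\<mu>T ?\<nu>T y) \<partial>?\<mu>T)"
      unfolding A set_lebesgue_integral_def
      by (subst integral_distr) (auto intro!: Bochner_Integration.integral_cong simp: indicator_def)
    also have "\<dots> = measure ?\<nu>T B"
      using \<mu>T.set_integral_enn2real_RN_deriv[OF finT(2) acT setsT] by simp
    also have "\<dots> = measure \<nu> A"
      using sets_eq_imp_space_eq[OF sets_eq] by (simp add: A measure_distr)
    also have "\<dots> = (\<integral>x\<in>A. enn2real (RN_deriv \<mu> \<nu> x) \<partial>\<mu>)"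
      using \<mu>.set_integral_enn2real_RN_deriv[OF fin(2) ac sets_eq] A by simp
    finally show "(\<integral>x\<in>A. enn2real (RN_deriv \<mu> \<nu> x) \<partial>\<mu>)
        = (\<integral>x\<in>A. enn2real (RN_deriv ?\<mu>T ?\<nu>T (T x)) \<partial>\<mu>)" ..
  qed
qed

lemma KL_ext_distr_le:
  assumes fin: "finite_measure \<mu>" "finite_measure \<nu>" and sets_eq: "sets \<nu> = sets \<mu>"
    and T[measurable]: "T \<in> \<mu> \<rightarrow>\<^sub>M N"
  shows "KL_ext (distr \<mu> N T) (distr \<nu> N T) \<le> KL_ext \<mu> \<nu>"
proof (cases "absolutely_continuous \<mu> \<nu>")
  case ac: True
  let ?q = "\<lambda>x. enn2real (RN_deriv \<mu> \<nu> x)" and ?G = "vimage_algebra (space \<mu>) T N"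
  have "KL_ext (distr \<mu> N T) (distr \<nu> N T)
      = (\<integral>\<^sup>+ y. kl_fun (enn2real (RN_deriv (distr \<mu> N T) (distr \<nu> N T) y)) \<partial>distr \<mu> N T)"
    using absolutely_continuous_distr[OF ac sets_eq T] by (simp add: KL_ext_eq_kl_fun)
  also have "\<dots> = (\<integral>\<^sup>+ x. kl_fun (enn2real (RN_deriv (distr \<mu> N T) (distr \<nu> N T) (T x))) \<partial>\<mu>)"
    by (rule nn_integral_distr) auto
  also have "\<dots> = (\<integral>\<^sup>+ x. kl_fun (real_cond_exp \<mu> ?G ?q x) \<partial>\<mu>)"
    using real_cond_exp_RN_deriv_distr[OF fin ac sets_eq T]
    by (intro nn_integral_cong_AE) (auto elim: eventually_mono)
  also have "\<dots> \<le> (\<integral>\<^sup>+ x. kl_fun (?q x) \<partial>\<mu>)"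
    using sigma_finite_measure.integrable_enn2real_RN_deriv[OF _ fin(2) ac sets_eq] fin(1)
    by (intro nn_integral_kl_fun_real_cond_exp_le subalgebra_vimage_algebra[OF T])
       (auto simp: finite_measure.sigma_finite_measure)
  also have "\<dots> = KL_ext \<mu> \<nu>"
    using ac by (simp add: KL_ext_eq_kl_fun)
  finally show ?thesis .
qed (simp add: KL_ext_def)

lemma KL_ext_distr_density_comp:
  assumes "finite_measure \<mu>" and T[measurable]: "T \<in> \<mu> \<rightarrow>\<^sub>M N"
    and r[measurable]: "r \<in> borel_measurable N"
  shows "KL_ext (distr \<mu> N T) (distr (density \<mu> (\<lambda>x. r (T x))) N T) = KL_ext \<mu> (density \<mu> (\<lambda>x. r (T x)))"
proof -
  interpret \<mu>: finite_measure \<mu> by fact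
  interpret \<mu>T: finite_measure "distr \<mu> N T" by (rule \<mu>.finite_measure_distr[OF T])
  let ?\<nu> = "density \<mu> (\<lambda>x. r (T x))"
  have dens_T: "density (distr \<mu> N T) r = distr ?\<nu> N T"
    by (rule density_distr[OF r T])
  have RN: "AE x in \<mu>. r (T x) = RN_deriv \<mu> ?\<nu> x"
    by (rule \<mu>.RN_deriv_unique) auto
  have RN_T: "AE y in distr \<mu> N T. r y = RN_deriv (distr \<mu> N T) (density (distr \<mu> N T) r) y"
    by (rule \<mu>T.RN_deriv_unique) auto
  have "KL_ext (distr \<mu> N T) (distr ?\<nu> N T) = (\<integral>\<^sup>+ y. kl_fun (enn2real (r y)) \<partial>distr \<mu> N T)"
    unfolding dens_T[symmetric] KL_ext_eq_kl_fun using RN_T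
    by (auto intro!: nn_integral_cong_AE absolutely_continuousI_density elim: eventually_mono)
  also have "\<dots> = (\<integral>\<^sup>+ x. kl_fun (enn2real (r (T x))) \<partial>\<mu>)"
    by (rule nn_integral_distr) auto
  also have "\<dots> = KL_ext \<mu> ?\<nu>"
    unfolding KL_ext_eq_kl_fun using RN
    by (auto intro!: nn_integral_cong_AE absolutely_continuousI_density elim: eventually_mono)
  finally show ?thesis .
qed

lemma distr_restr_to_subalg:
  assumes sub: "subalgebra Q S" and V: "V \<in> S \<rightarrow>\<^sub>M N"
  shows "distr (restr_to_subalg Q S) N V = distr Q N V"
proof (rule measure_eqI)
  fix A assume A: "A \<in> sets (distr (restr_to_subalg Q S) N V)"
  then have "V -` A \<inter> space Q \<in> sets S"
    using measurable_sets[OF V, of A] sub by (simp add: subalgebra_def)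
  then show "emeasure (distr (restr_to_subalg Q S) N V) A = emeasure (distr Q N V) A"
    using A measurable_in_subalg[OF sub V] measurable_from_subalg[OF sub V]
    by (simp add: emeasure_distr space_restr_to_subalg emeasure_restr_to_subalg[OF sub])
qed simp

lemma measurable_Pair_restr_to_subalg:
  assumes "subalgebra Q S" "Y \<in> borel_measurable Q"
  shows "(\<lambda>\<omega>. (Y \<omega>, \<omega>)) \<in> Q \<rightarrow>\<^sub>M distr Q borel Y \<Otimes>\<^sub>M restr_to_subalg Q S"
  using assms
  by (intro measurable_Pair measurableI)
     (auto simp: space_restr_to_subalg sets_restr_to_subalg subalgebra_def)

lemma measurable_map_snd_restr_to_subalg:
  assumes "subalgebra Q S" and [measurable]: "V \<in> S \<rightarrow>\<^sub>M borel"
  shows "(\<lambda>(y, \<omega>). (y, V \<omega>)) \<in> distr Q borel Y \<Otimes>\<^sub>M restr_to_subalg Q S \<rightarrow>\<^sub>M borel \<Otimes>\<^sub>M borel"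
proof -
  have [measurable]: "V \<in> restr_to_subalg Q S \<rightarrow>\<^sub>M borel"
    by (rule measurable_in_subalg[OF assms])
  have "(\<lambda>(y, \<omega>). (y, V \<omega>)) \<in> borel \<Otimes>\<^sub>M restr_to_subalg Q S \<rightarrow>\<^sub>M borel \<Otimes>\<^sub>M borel"
    by measurable
  then show ?thesis by (simp cong: measurable_cong_sets sets_pair_measure_cong)
qed

lemma real_cond_exp_indicator_eqI:
  fixes V :: "'a \<Rightarrow> 'v::topological_space"
  assumes "finite_measure Q" and [measurable]: "V \<in> borel_measurable Q"
    and [measurable]: "g \<in> borel_measurable borel" and D[measurable]: "D \<in> sets Q"
    and version: "\<And>C. C \<in> sets borel \<Longrightarrow>
      (\<integral>\<^sup>+\<omega>. indicator C (V \<omega>) * g (V \<omega>) \<partial>Q) = emeasure Q (D \<inter> V -` C)"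
  shows "AE \<omega> in Q. real_cond_exp Q (gen_sigma Q V) (indicator D) \<omega> = enn2real (g (V \<omega>))"
proof -
  interpret finite_measure Q by fact
  have G: "gen_sigma Q V = vimage_algebra (space Q) V borel" by (simp add: gen_sigma_def)
  interpret finite_measure_subalgebra Q "gen_sigma Q V"
    by unfold_locales (simp add: G subalgebra_vimage_algebra)
  have [measurable]: "V \<in> gen_sigma Q V \<rightarrow>\<^sub>M borel"
    unfolding G by (rule measurable_vimage_algebra1) simp
  have g_finite: "AE \<omega> in Q. g (V \<omega>) \<noteq> \<infinity>"
    using version[of UNIV] by (intro nn_integral_PInf_AE) auto
  have set_integral: "has_bochner_integral Q (\<lambda>\<omega>. indicator C (V \<omega>) * enn2real (g (V \<omega>)))
      (measure Q (D \<inter> V -` C))" if [measurable]: "C \<in> sets borel" for C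
  proof (rule has_bochner_integral_nn_integral)
    have "(\<integral>\<^sup>+\<omega>. ennreal (indicator C (V \<omega>) * enn2real (g (V \<omega>))) \<partial>Q)
        = (\<integral>\<^sup>+\<omega>. indicator C (V \<omega>) * g (V \<omega>) \<partial>Q)"
      using g_finite by (intro nn_integral_cong_AE) (auto simp: indicator_def less_top)
    then show "(\<integral>\<^sup>+\<omega>. ennreal (indicator C (V \<omega>) * enn2real (g (V \<omega>))) \<partial>Q)
        = ennreal (measure Q (D \<inter> V -` C))"
      using version by (simp add: emeasure_eq_measure)
  qed auto
  show ?thesis
  proof (rule real_cond_exp_charact)
    show "integrable Q (indicator D :: 'a \<Rightarrow> real)"
      by (intro integrable_real_indicator D) (simp add: less_top[symmetric])
    show "integrable Q (\<lambda>\<omega>. enn2real (g (V \<omega>)))"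
      using set_integral[of UNIV] by (simp add: integrable.intros)
    show "(\<lambda>\<omega>. enn2real (g (V \<omega>))) \<in> borel_measurable (gen_sigma Q V)" by measurable
  next
    fix A assume "A \<in> sets (gen_sigma Q V)"
    then obtain C where C[measurable]: "C \<in> sets borel" and A: "A = V -` C \<inter> space Q"
      unfolding G using sets_vimage_algebra2[of V "space Q" borel] by auto
    have "A \<inter> D = D \<inter> V -` C" "D \<inter> V -` C \<subseteq> space Q"
      using sets.sets_into_space[OF D] A by blast+
    then have "(\<integral>\<omega>\<in>A. indicator D \<omega> \<partial>Q) = measure Q (D \<inter> V -` C)"
      by (simp add: set_lebesgue_integral_def indicator_inter_arith[symmetric] Int_absorb1)
    also have "\<dots> = (\<integral>\<omega>. indicator C (V \<omega>) * enn2real (g (V \<omega>)) \<partial>Q)"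
      using has_bochner_integral_integral_eq[OF set_integral[OF C]] ..
    also have "\<dots> = (\<integral>\<omega>\<in>A. enn2real (g (V \<omega>)) \<partial>Q)"
      unfolding A set_lebesgue_integral_def
      by (intro Bochner_Integration.integral_cong) (auto simp: indicator_def)
    finally show "(\<integral>\<omega>\<in>A. indicator D \<omega> \<partial>Q) = (\<integral>\<omega>\<in>A. enn2real (g (V \<omega>)) \<partial>Q)" .
  qed
qed

lemma cond_indep_measure_eq_integral_real_cond_exp:
  assumes "finite_measure Q" and [measurable]: "X \<in> borel_measurable Q" "Y \<in> borel_measurable Q"
    "V \<in> borel_measurable Q"
    and ci: "cond_indep Q X Y V" and [measurable]: "A \<in> sets borel" "B \<in> sets borel"
  shows "measure Q (X -` A \<inter> Y -` B \<inter> space Q)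
    = (\<integral>\<omega>. real_cond_exp Q (gen_sigma Q V) (indicator (Y -` B \<inter> space Q)) \<omega>
           * indicator (X -` A \<inter> space Q) \<omega> \<partial>Q)"
proof -
  interpret finite_measure Q by fact
  let ?G = "gen_sigma Q V"
  let ?E = "\<lambda>D. real_cond_exp Q ?G (indicator D)"
  interpret finite_measure_subalgebra Q ?G
    by unfold_locales (simp add: gen_sigma_def subalgebra_vimage_algebra)
  have int_ind: "integrable Q (indicator D :: 'a \<Rightarrow> real)" if "D \<in> sets Q" for D
    using that by (intro integrable_real_indicator) (simp_all add: less_top[symmetric])
  have "measure Q (X -` A \<inter> Y -` B \<inter> space Q) = (\<integral>\<omega>. indicator (X -` A \<inter> Y -` B \<inter> space Q) \<omega> \<partial>Q)"
    by (simp add: Int_absorb2 Int_assoc)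
  also have "\<dots> = (\<integral>\<omega>. ?E (X -` A \<inter> Y -` B \<inter> space Q) \<omega> \<partial>Q)"
    by (rule real_cond_exp_int(2)[symmetric]) (auto intro: int_ind)
  also have "\<dots> = (\<integral>\<omega>. ?E (Y -` B \<inter> space Q) \<omega> * ?E (X -` A \<inter> space Q) \<omega> \<partial>Q)"
    using ci unfolding cond_indep_def by (intro integral_cong_AE) (auto simp: mult.commute)
  also have "\<dots> = (\<integral>\<omega>. ?E (Y -` B \<inter> space Q) \<omega> * indicator (X -` A \<inter> space Q) \<omega> \<partial>Q)"
  proof (rule real_cond_exp_intg(2))
    show "integrable Q (\<lambda>\<omega>. ?E (Y -` B \<inter> space Q) \<omega> * indicator (X -` A \<inter> space Q) \<omega>)"
      using integrable_mult_indicator[OF _ real_cond_exp_int(1)[OF int_ind]]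
      by (simp add: mult.commute)
  qed auto
  finally show ?thesis .
qed

lemma cond_indep_emeasure_eq_nn_integral:
  fixes V :: "'a \<Rightarrow> 'v::topological_space"
  assumes "finite_measure Q" and [measurable]: "X \<in> borel_measurable Q" "Y \<in> borel_measurable Q"
    "V \<in> borel_measurable Q"
    and ci: "cond_indep Q X Y V" and [measurable]: "A \<in> sets borel" "B \<in> sets borel"
    and [measurable]: "g \<in> borel_measurable borel"
    and version: "\<And>C. C \<in> sets borel \<Longrightarrow>
      (\<integral>\<^sup>+\<omega>. indicator C (V \<omega>) * g (V \<omega>) \<partial>Q) = emeasure Q (Y -` B \<inter> space Q \<inter> V -` C)"
  shows "emeasure Q (X -` A \<inter> Y -` B \<inter> space Q) = (\<integral>\<^sup>+\<omega>. indicator (X -` A \<inter> space Q) \<omega> * g (V \<omega>) \<partial>Q)"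
proof -
  interpret finite_measure Q by fact
  let ?h = "\<lambda>\<omega>. enn2real (g (V \<omega>)) * indicator (X -` A \<inter> space Q) \<omega>"
  have ce: "AE \<omega> in Q. real_cond_exp Q (gen_sigma Q V) (indicator (Y -` B \<inter> space Q)) \<omega> = enn2real (g (V \<omega>))"
    using version by (intro real_cond_exp_indicator_eqI) (auto simp: finite_measure_axioms)
  have g_finite: "AE \<omega> in Q. g (V \<omega>) \<noteq> \<infinity>"
    using version[of UNIV] by (intro nn_integral_PInf_AE) auto
  have "measure Q (X -` A \<inter> Y -` B \<inter> space Q)
      = (\<integral>\<omega>. real_cond_exp Q (gen_sigma Q V) (indicator (Y -` B \<inter> space Q)) \<omega>
           * indicator (X -` A \<inter> space Q) \<omega> \<partial>Q)"
    by (rule cond_indep_measure_eq_integral_real_cond_exp) (auto intro: ci finite_measure_axioms)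
  also have "\<dots> = integral\<^sup>L Q ?h"
    using ce by (intro integral_cong_AE) (auto elim: eventually_mono)
  also have "\<dots> = enn2real (\<integral>\<^sup>+\<omega>. ?h \<omega> \<partial>Q)"
    by (rule integral_eq_nn_integral) auto
  finally have "emeasure Q (X -` A \<inter> Y -` B \<inter> space Q) = ennreal (enn2real (\<integral>\<^sup>+\<omega>. ?h \<omega> \<partial>Q))"
    by (simp add: emeasure_eq_measure)
  also have "\<dots> = (\<integral>\<^sup>+\<omega>. ?h \<omega> \<partial>Q)"
  proof (rule ennreal_enn2real)
    have "(\<integral>\<^sup>+\<omega>. ?h \<omega> \<partial>Q) \<le> (\<integral>\<^sup>+\<omega>. indicator UNIV (V \<omega>) * g (V \<omega>) \<partial>Q)"
      by (intro nn_integral_mono) (auto simp: indicator_def ennreal_enn2real_if)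
    also have "\<dots> < \<top>" using version[of UNIV] by (simp add: less_top[symmetric])
    finally show "(\<integral>\<^sup>+\<omega>. ?h \<omega> \<partial>Q) < \<top>" .
  qed
  also have "\<dots> = (\<integral>\<^sup>+\<omega>. indicator (X -` A \<inter> space Q) \<omega> * g (V \<omega>) \<partial>Q)"
    using g_finite by (intro nn_integral_cong_AE) (auto simp: indicator_def less_top)
  finally show ?thesis .
qed

(* If r is the density of the joint law of (Y, Phi) with respect to the product of the
   marginals and P is the law of Y, then density_kernel r P B (Phi omega) is P(Y in B | Phi). *)
definition density_kernel :: "('y \<times> 'p \<Rightarrow> ennreal) \<Rightarrow> 'y measure \<Rightarrow> 'y set \<Rightarrow> 'p \<Rightarrow> ennreal" where
  "density_kernel r P B \<phi> = (\<integral>\<^sup>+y. indicator B y * r (y, \<phi>) \<partial>P)"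

lemma borel_measurable_density_kernel [measurable]:
  fixes r :: "'y::topological_space \<times> 'p::topological_space \<Rightarrow> ennreal"
  assumes "sigma_finite_measure P" "sets P = sets borel"
    and [measurable]: "r \<in> borel_measurable (borel \<Otimes>\<^sub>M borel)" "B \<in> sets borel"
  shows "density_kernel r P B \<in> borel_measurable borel"
proof -
  have [measurable_cong]: "sets P = sets borel" by fact
  have "(\<lambda>(\<phi>, y). indicator B y * r (y, \<phi>)) \<in> borel_measurable (borel \<Otimes>\<^sub>M P)"
    by measurable
  then show ?thesis
    unfolding density_kernel_def by (rule sigma_finite_measure.borel_measurable_nn_integral[OF assms(1)])
qed

lemma indicator_times_density_kernel:
  "indicator C x * density_kernel r P B \<phi> = (\<integral>\<^sup>+y. r (y, \<phi>) * indicator (B \<times> C) (y, x) \<partial>P)"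
  unfolding density_kernel_def by (cases "x \<in> C") (simp_all add: indicator_times mult.commute)

lemma nn_integral_density_kernel_eq_emeasure:
  fixes Y :: "'a \<Rightarrow> 'y::topological_space" and V :: "'a \<Rightarrow> 'v::topological_space"
  assumes "finite_measure Q" and [measurable]: "Y \<in> borel_measurable Q" "V \<in> borel_measurable Q"
    and [measurable]: "r \<in> borel_measurable (borel \<Otimes>\<^sub>M borel)"
    and dens: "density (distr Q borel Y \<Otimes>\<^sub>M distr Q borel V) r
      = distr Q (borel \<Otimes>\<^sub>M borel) (\<lambda>\<omega>. (Y \<omega>, V \<omega>))"
    and [measurable]: "B \<in> sets borel" "C \<in> sets borel"
  shows "(\<integral>\<^sup>+\<omega>. indicator C (V \<omega>) * density_kernel r (distr Q borel Y) B (V \<omega>) \<partial>Q)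
    = emeasure Q (Y -` B \<inter> space Q \<inter> V -` C)"
proof -
  interpret Q: finite_measure Q by fact
  let ?PY = "distr Q borel Y" and ?PV = "distr Q borel V"
  interpret pair_sigma_finite ?PY ?PV
    unfolding pair_sigma_finite_def
    by (auto intro!: finite_measure.sigma_finite_measure Q.finite_measure_distr)
  have [measurable_cong]: "sets ?PY = sets borel" "sets ?PV = sets borel" by simp_all
  have [measurable]: "density_kernel r ?PY B \<in> borel_measurable borel"
    using M1.sigma_finite_measure_axioms by measurable
  have "(\<integral>\<^sup>+\<omega>. indicator C (V \<omega>) * density_kernel r ?PY B (V \<omega>) \<partial>Q)
      = (\<integral>\<^sup>+\<phi>. indicator C \<phi> * density_kernel r ?PY B \<phi> \<partial>?PV)"
    by (rule nn_integral_distr[symmetric]) measurable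
  also have "\<dots> = (\<integral>\<^sup>+\<phi>. \<integral>\<^sup>+y. r (y, \<phi>) * indicator (B \<times> C) (y, \<phi>) \<partial>?PY \<partial>?PV)"
    by (simp add: indicator_times_density_kernel)
  also have "\<dots> = (\<integral>\<^sup>+z. r z * indicator (B \<times> C) z \<partial>(?PY \<Otimes>\<^sub>M ?PV))"
    by (rule nn_integral_snd) measurable
  also have "\<dots> = emeasure (distr Q (borel \<Otimes>\<^sub>M borel) (\<lambda>\<omega>. (Y \<omega>, V \<omega>))) (B \<times> C)"
    unfolding dens[symmetric] by (rule emeasure_density[symmetric]) measurable
  also have "\<dots> = emeasure Q (Y -` B \<inter> space Q \<inter> V -` C)"
    by (subst emeasure_distr) (auto intro!: arg_cong[where f="emeasure Q"])
  finally show ?thesis .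
qed

(* Conditional independence reduces P(Y in a, X in A) to E[1_{X in A} P(Y in a | Phi)], and the
   density kernel supplies P(Y in a | Phi). *)
lemma emeasure_distr_Pair_restr_to_subalg_times:
  fixes X :: "'a \<Rightarrow> 'x::topological_space" and Y :: "'a \<Rightarrow> 'y::topological_space"
    and Phi :: "'a \<Rightarrow> 'p::topological_space"
  assumes "finite_measure Q" and [measurable]: "X \<in> borel_measurable Q" "Y \<in> borel_measurable Q"
    and Phi: "Phi \<in> gen_sigma Q X \<rightarrow>\<^sub>M borel" and ci: "cond_indep Q X Y Phi"
    and [measurable]: "r \<in> borel_measurable (borel \<Otimes>\<^sub>M borel)"
    and dens: "density (distr Q borel Y \<Otimes>\<^sub>M distr Q borel Phi) r
      = distr Q (borel \<Otimes>\<^sub>M borel) (\<lambda>\<omega>. (Y \<omega>, Phi \<omega>))"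
    and [measurable]: "a \<in> sets borel" and b: "b \<in> sets (gen_sigma Q X)"
  defines "\<mu> \<equiv> distr Q borel Y \<Otimes>\<^sub>M restr_to_subalg Q (gen_sigma Q X)"
  shows "emeasure (distr Q \<mu> (\<lambda>\<omega>. (Y \<omega>, \<omega>))) (a \<times> b)
    = emeasure (density \<mu> (\<lambda>(y, \<omega>). r (y, Phi \<omega>))) (a \<times> b)"
proof -
  interpret Q: finite_measure Q by fact
  let ?PY = "distr Q borel Y" and ?S = "gen_sigma Q X"
  let ?QX = "restr_to_subalg Q ?S"
  have sub: "subalgebra Q ?S" by (simp add: gen_sigma_def subalgebra_vimage_algebra)
  have [measurable_cong]: "sets ?QX = sets ?S" by (rule sets_restr_to_subalg[OF sub])
  have [measurable_cong]: "sets ?PY = sets borel" by simp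
  have [measurable]: "Phi \<in> ?S \<rightarrow>\<^sub>M borel" "b \<in> sets ?S" using Phi b by simp_all
  have [measurable]: "Phi \<in> borel_measurable Q" by (rule measurable_from_subalg[OF sub Phi])
  interpret pair_sigma_finite ?PY ?QX
    unfolding pair_sigma_finite_def
    by (auto intro!: finite_measure.sigma_finite_measure Q.finite_measure_distr
        finite_measure_restr_to_subalg[OF sub] Q.finite_measure_axioms)
  have [measurable]: "density_kernel r ?PY a \<in> borel_measurable borel"
    using M1.sigma_finite_measure_axioms by measurable
  obtain A where [measurable]: "A \<in> sets borel" and bA: "b = X -` A \<inter> space Q"
    using b sets_vimage_algebra2[of X "space Q" borel] by (auto simp: gen_sigma_def)
  have "a \<times> b \<in> sets \<mu>"
    unfolding \<mu>_def using b by (simp add: sets_restr_to_subalg[OF sub])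
  then have "emeasure (distr Q \<mu> (\<lambda>\<omega>. (Y \<omega>, \<omega>))) (a \<times> b) = emeasure Q (X -` A \<inter> Y -` a \<inter> space Q)"
    using measurable_Pair_restr_to_subalg[OF sub, of Y] unfolding \<mu>_def
    by (subst emeasure_distr) (auto simp: bA intro!: arg_cong[where f="emeasure Q"])
  also have "\<dots> = (\<integral>\<^sup>+\<omega>. indicator b \<omega> * density_kernel r ?PY a (Phi \<omega>) \<partial>Q)"
    unfolding bA using ci dens
    by (intro cond_indep_emeasure_eq_nn_integral nn_integral_density_kernel_eq_emeasure)
       (auto intro: Q.finite_measure_axioms)
  also have "\<dots> = (\<integral>\<^sup>+\<omega>. indicator b \<omega> * density_kernel r ?PY a (Phi \<omega>) \<partial>?QX)"
    by (rule nn_integral_subalgebra2[symmetric, OF sub]) measurable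
  also have "\<dots> = (\<integral>\<^sup>+\<omega>. \<integral>\<^sup>+y. r (y, Phi \<omega>) * indicator (a \<times> b) (y, \<omega>) \<partial>?PY \<partial>?QX)"
    by (simp add: indicator_times_density_kernel)
  also have "\<dots> = (\<integral>\<^sup>+z. (\<lambda>(y, \<omega>). r (y, Phi \<omega>)) z * indicator (a \<times> b) z \<partial>\<mu>)"
    unfolding \<mu>_def by (subst nn_integral_snd[symmetric]) (auto simp: case_prod_beta)
  also have "\<dots> = emeasure (density \<mu> (\<lambda>(y, \<omega>). r (y, Phi \<omega>))) (a \<times> b)"
    unfolding \<mu>_def by (rule emeasure_density[symmetric]) auto
  finally show ?thesis .
qed

lemma distr_Pair_restr_to_subalg_eq_density:
  fixes X :: "'a \<Rightarrow> 'x::topological_space" and Y :: "'a \<Rightarrow> 'y::topological_space"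
    and Phi :: "'a \<Rightarrow> 'p::topological_space"
  assumes "finite_measure Q" and [measurable]: "X \<in> borel_measurable Q" "Y \<in> borel_measurable Q"
    and Phi: "Phi \<in> gen_sigma Q X \<rightarrow>\<^sub>M borel" and ci: "cond_indep Q X Y Phi"
    and r[measurable]: "r \<in> borel_measurable (borel \<Otimes>\<^sub>M borel)"
    and dens: "density (distr Q borel Y \<Otimes>\<^sub>M distr Q borel Phi) r
      = distr Q (borel \<Otimes>\<^sub>M borel) (\<lambda>\<omega>. (Y \<omega>, Phi \<omega>))"
  defines "\<mu> \<equiv> distr Q borel Y \<Otimes>\<^sub>M restr_to_subalg Q (gen_sigma Q X)"
  shows "distr Q \<mu> (\<lambda>\<omega>. (Y \<omega>, \<omega>)) = density \<mu> (\<lambda>(y, \<omega>). r (y, Phi \<omega>))"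
proof -
  let ?PY = "distr Q borel Y" and ?QX = "restr_to_subalg Q (gen_sigma Q X)"
  let ?E = "{a \<times> b | a b. a \<in> sets ?PY \<and> b \<in> sets ?QX}"
  have sub: "subalgebra Q (gen_sigma Q X)" by (simp add: gen_sigma_def subalgebra_vimage_algebra)
  have Pair_Y: "(\<lambda>\<omega>. (Y \<omega>, \<omega>)) \<in> Q \<rightarrow>\<^sub>M \<mu>"
    unfolding \<mu>_def by (rule measurable_Pair_restr_to_subalg[OF sub]) simp
  show ?thesis
  proof (rule measure_eqI_generator_eq[where E="?E" and \<Omega>="space ?PY \<times> space ?QX"
        and A="\<lambda>_. space ?PY \<times> space ?QX"])
    show "Int_stable ?E" by (rule Int_stable_pair_measure_generator)
    show "?E \<subseteq> Pow (space ?PY \<times> space ?QX)"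
      using sets.sets_into_space[of _ ?PY] sets.sets_into_space[of _ ?QX] by blast
    show "sets (distr Q \<mu> (\<lambda>\<omega>. (Y \<omega>, \<omega>))) = sigma_sets (space ?PY \<times> space ?QX) ?E"
      unfolding \<mu>_def by (simp only: sets_distr sets_pair_measure)
    show "sets (density \<mu> (\<lambda>(y, \<omega>). r (y, Phi \<omega>))) = sigma_sets (space ?PY \<times> space ?QX) ?E"
      unfolding \<mu>_def by (simp only: sets_density sets_pair_measure)
    show "range (\<lambda>_. space ?PY \<times> space ?QX) \<subseteq> ?E" by blast
    show "(\<Union>i::nat. space ?PY \<times> space ?QX) = space ?PY \<times> space ?QX" by simp
    show "emeasure (distr Q \<mu> (\<lambda>\<omega>. (Y \<omega>, \<omega>))) (space ?PY \<times> space ?QX) \<noteq> \<infinity>"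
      using finite_measure.finite_measure_distr[OF assms(1) Pair_Y] unfolding \<mu>_def
      by (simp add: finite_measure.emeasure_finite space_pair_measure)
  next
    fix R assume "R \<in> ?E"
    then obtain a b where "R = a \<times> b" "a \<in> sets borel" "b \<in> sets (gen_sigma Q X)"
      using sets_restr_to_subalg[OF sub] by auto
    then show "emeasure (distr Q \<mu> (\<lambda>\<omega>. (Y \<omega>, \<omega>))) R = emeasure (density \<mu> (\<lambda>(y, \<omega>). r (y, Phi \<omega>))) R"
      unfolding \<mu>_def using assms(1-3) Phi ci r dens
      by (simp add: emeasure_distr_Pair_restr_to_subalg_times)
  qed
qed

lemma mutual_info_eq_KL_ext_distr_restr_to_subalg:
  fixes Y :: "'a \<Rightarrow> 'y::topological_space" and V :: "'a \<Rightarrow> 'v::topological_space"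
  assumes "finite_measure Q" "subalgebra Q S" and [measurable]: "Y \<in> borel_measurable Q"
    and V: "V \<in> S \<rightarrow>\<^sub>M borel"
  defines "\<mu> \<equiv> distr Q borel Y \<Otimes>\<^sub>M restr_to_subalg Q S"
  shows "mutual_info Q Y V = KL_ext (distr \<mu> (borel \<Otimes>\<^sub>M borel) (\<lambda>(y, \<omega>). (y, V \<omega>)))
    (distr (distr Q \<mu> (\<lambda>\<omega>. (Y \<omega>, \<omega>))) (borel \<Otimes>\<^sub>M borel) (\<lambda>(y, \<omega>). (y, V \<omega>)))"
proof -
  interpret finite_measure Q by fact
  let ?QS = "restr_to_subalg Q S"
  have distr_V: "distr ?QS borel V = distr Q borel V"
    by (rule distr_restr_to_subalg[OF assms(2) V])
  have "sigma_finite_measure (distr ?QS borel V)"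
    unfolding distr_V
    by (intro finite_measure.sigma_finite_measure finite_measure_distr measurable_from_subalg[OF assms(2) V])
  then have "distr Q borel Y \<Otimes>\<^sub>M distr Q borel V = distr \<mu> (borel \<Otimes>\<^sub>M borel) (\<lambda>(y, \<omega>). (y, V \<omega>))"
    using pair_measure_distr[of "\<lambda>y. y" "distr Q borel Y" borel V ?QS borel]
      measurable_in_subalg[OF assms(2) V]
    by (simp add: distr_V distr_id2 \<mu>_def)
  moreover have "distr Q (borel \<Otimes>\<^sub>M borel) (\<lambda>\<omega>. (Y \<omega>, V \<omega>))
      = distr (distr Q \<mu> (\<lambda>\<omega>. (Y \<omega>, \<omega>))) (borel \<Otimes>\<^sub>M borel) (\<lambda>(y, \<omega>). (y, V \<omega>))"
    unfolding \<mu>_def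
    by (subst distr_distr[OF measurable_map_snd_restr_to_subalg[OF assms(2) V] measurable_Pair_restr_to_subalg[OF assms(2)]])
       (auto simp: comp_def)
  ultimately show ?thesis by (simp add: mutual_info_def)
qed

lemma density_RN_deriv_joint_law:
  assumes "prob_space Q" and [measurable]: "Y \<in> borel_measurable Q" "V \<in> borel_measurable Q"
    and ac: "absolutely_continuous (distr Q borel Y \<Otimes>\<^sub>M distr Q borel V)
      (distr Q (borel \<Otimes>\<^sub>M borel) (\<lambda>\<omega>. (Y \<omega>, V \<omega>)))"
  shows "density (distr Q borel Y \<Otimes>\<^sub>M distr Q borel V)
      (RN_deriv (distr Q borel Y \<Otimes>\<^sub>M distr Q borel V) (distr Q (borel \<Otimes>\<^sub>M borel) (\<lambda>\<omega>. (Y \<omega>, V \<omega>))))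
    = distr Q (borel \<Otimes>\<^sub>M borel) (\<lambda>\<omega>. (Y \<omega>, V \<omega>))"
proof -
  interpret pair_prob_space "distr Q borel Y" "distr Q borel V"
    using assms(1)
    by (simp add: pair_prob_space_def pair_sigma_finite_def prob_space.prob_space_distr prob_space_imp_sigma_finite)
  show ?thesis
    by (rule P.density_RN_deriv[OF ac]) (simp cong: sets_pair_measure_cong)
qed

lemma borel_measurable_RN_deriv_joint_law:
  "RN_deriv (distr Q borel Y \<Otimes>\<^sub>M distr Q borel V) J \<in> borel_measurable (borel \<Otimes>\<^sub>M borel)"
  using borel_measurable_RN_deriv[of "distr Q borel Y \<Otimes>\<^sub>M distr Q borel V" J]
  by (simp cong: measurable_cong_sets sets_pair_measure_cong)

theorem mutual_info_le_of_cond_indep: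
  fixes X :: "'a \<Rightarrow> 'x::topological_space" and Y :: "'a \<Rightarrow> 'y::topological_space"
    and Phi :: "'a \<Rightarrow> 'p::topological_space" and Z :: "'a \<Rightarrow> 'z::topological_space"
  assumes "prob_space Q" and [measurable]: "X \<in> borel_measurable Q" "Y \<in> borel_measurable Q"
    and Phi: "Phi \<in> gen_sigma Q X \<rightarrow>\<^sub>M borel" and ci: "cond_indep Q X Y Phi"
    and Z: "Z \<in> gen_sigma Q X \<rightarrow>\<^sub>M borel"
  shows "mutual_info Q Y Z \<le> mutual_info Q Y Phi"
proof -
  interpret prob_space Q by fact
  let ?PYPF = "distr Q borel Y \<Otimes>\<^sub>M distr Q borel Phi"
  let ?J = "distr Q (borel \<Otimes>\<^sub>M borel) (\<lambda>\<omega>. (Y \<omega>, Phi \<omega>))"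
  show ?thesis
  proof (cases "absolutely_continuous ?PYPF ?J")
    case ac: True
    let ?S = "gen_sigma Q X"
    let ?\<mu> = "distr Q borel Y \<Otimes>\<^sub>M restr_to_subalg Q ?S"
    let ?\<nu> = "distr Q ?\<mu> (\<lambda>\<omega>. (Y \<omega>, \<omega>))"
    let ?r = "RN_deriv ?PYPF ?J"
    have sub: "subalgebra Q ?S" by (simp add: gen_sigma_def subalgebra_vimage_algebra)
    have [measurable]: "Phi \<in> borel_measurable Q" by (rule measurable_from_subalg[OF sub Phi])
    note dens = density_RN_deriv_joint_law[OF assms(1) _ _ ac]
      and r = borel_measurable_RN_deriv_joint_law[of Q Y Phi ?J]
    have \<nu>: "?\<nu> = density ?\<mu> (\<lambda>(y, \<omega>). ?r (y, Phi \<omega>))"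
      by (rule distr_Pair_restr_to_subalg_eq_density[OF _ _ _ Phi ci r dens])
         (auto intro: finite_measure_axioms)
    have "prob_space ?\<mu>"
      using prob_space_restr_to_subalg[OF sub prob_space_axioms] by (intro prob_space_pair prob_space_distr) auto
    then have fin_\<mu>: "finite_measure ?\<mu>" by (simp add: prob_space_def)
    have Pair_Y: "(\<lambda>\<omega>. (Y \<omega>, \<omega>)) \<in> Q \<rightarrow>\<^sub>M ?\<mu>"
      by (rule measurable_Pair_restr_to_subalg[OF sub]) simp
    have fin_\<nu>: "finite_measure ?\<nu>" by (rule finite_measure_distr[OF Pair_Y])
    note Pair_Z = measurable_map_snd_restr_to_subalg[OF sub Z, of Y]
    note Pair_Phi = measurable_map_snd_restr_to_subalg[OF sub Phi, of Y]
    have "mutual_info Q Y Z = KL_ext (distr ?\<mu> (borel \<Otimes>\<^sub>M borel) (\<lambda>(y, \<omega>). (y, Z \<omega>)))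
        (distr ?\<nu> (borel \<Otimes>\<^sub>M borel) (\<lambda>(y, \<omega>). (y, Z \<omega>)))"
      by (rule mutual_info_eq_KL_ext_distr_restr_to_subalg[OF finite_measure_axioms sub _ Z]) simp
    also have "\<dots> \<le> KL_ext ?\<mu> ?\<nu>"
      by (rule KL_ext_distr_le[OF fin_\<mu> fin_\<nu> _ Pair_Z]) simp
    also have "\<dots> = KL_ext (distr ?\<mu> (borel \<Otimes>\<^sub>M borel) (\<lambda>(y, \<omega>). (y, Phi \<omega>)))
        (distr ?\<nu> (borel \<Otimes>\<^sub>M borel) (\<lambda>(y, \<omega>). (y, Phi \<omega>)))"
      using KL_ext_distr_density_comp[OF fin_\<mu> Pair_Phi r] by (simp add: \<nu> case_prod_beta')
    also have "\<dots> = mutual_info Q Y Phi"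
      by (rule mutual_info_eq_KL_ext_distr_restr_to_subalg[symmetric, OF finite_measure_axioms sub _ Phi]) simp
    finally show ?thesis .
  qed (simp add: mutual_info_def KL_ext_def)
qed

theorem lemma2:
  fixes M :: "'a measure"
    and X :: "'a \<Rightarrow> 'x::euclidean_space"
    and Y :: "'a \<Rightarrow> 'y::euclidean_space"
    and E :: "'a \<Rightarrow> 'e::euclidean_space"
    and Pe :: "'e \<Rightarrow> 'a measure"
    and Phi :: "'a \<Rightarrow> 'p::euclidean_space"
    and \<epsilon> :: 'e
  assumes "prob_space M"
    and "X \<in> borel_measurable M" and "Y \<in> borel_measurable M" and "E \<in> borel_measurable M"
    and "cond_law_kernel M E Pe"
    and "invariant_feature M X Y E Pe Phi"
    and "\<epsilon> \<in> msupp (distr M borel E)"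
    and "cond_indep (Pe \<epsilon>) X Y Phi"
  shows "\<forall>Z :: 'a \<Rightarrow> 'z::euclidean_space. Z \<in> gen_sigma M X \<rightarrow>\<^sub>M borel \<longrightarrow>
           mutual_info (Pe \<epsilon>) Y Z \<le> mutual_info (Pe \<epsilon>) Y Phi"
proof (intro allI impI)
  fix Z :: "'a \<Rightarrow> 'z::euclidean_space"
  assume Z: "Z \<in> gen_sigma M X \<rightarrow>\<^sub>M borel"
  have Q: "prob_space (Pe \<epsilon>)" and sets_Q: "sets (Pe \<epsilon>) = sets M"
    using assms(5) unfolding cond_law_kernel_def by auto
  have gen_sigma_Q: "gen_sigma (Pe \<epsilon>) X = gen_sigma M X"
    by (simp add: gen_sigma_def sets_eq_imp_space_eq[OF sets_Q])
  \<comment> \<open>Invariance of Phi is only used for Phi \<in> sigma(X).\<close>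
  have Phi: "Phi \<in> gen_sigma M X \<rightarrow>\<^sub>M borel"
    using assms(6) unfolding invariant_feature_def by blast
  have meas_Q: "Pe \<epsilon> \<rightarrow>\<^sub>M N = M \<rightarrow>\<^sub>M N" for N :: "'b measure"
    by (rule measurable_cong_sets[OF sets_Q refl])
  show "mutual_info (Pe \<epsilon>) Y Z \<le> mutual_info (Pe \<epsilon>) Y Phi"
    using assms(2,3) Phi assms(8) Z unfolding meas_Q[symmetric] gen_sigma_Q[symmetric]
    by (rule mutual_info_le_of_cond_indep[OF Q])
qed

end
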